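(* Let $\mathcal{H}$ be a hereditary $\sigma$-ring of sets, let $\mu^*$ be an outer measure on $\mathcal{H}$, let $X$ be a set with $X\cap\bigcup\mathcal{H}\neq\emptyset$, and let $\overline{\overline{S}}$ be the class of all $\mu^{**}$-measurable sets. Then $\overline{\overline{S}}$ is a ring of sets, i.e. $L\cup M\in\overline{\overline{S}}$ and $M-L\in\overline{\overline{S}}$ whenever $L,M\in\overline{\overline{S}}$.
   Context: A nonempty class $\mathcal{E}$ of sets is hereditary if $F\in\mathcal{E}$ whenever $E\in\mathcal{E}$ and $F\subseteq E$. A set $E\in\mathcal{H}$ is $\mu^*$-measurable if $\mu^*(A)=\mu^*(A\cap E)+\mu^*(A\cap E')$ for every $A\in\mathcal{H}$, where $E'$ denotes the complement of $E$. Let $\overline{S}$ denote the class of all $\mu^*$-measurable sets. Let $K=\{B\subseteq X: B\cap E\in\mathcal{H}\text{ for all }E\in\mathcal{H}\}$. A set $Q\in K$ is called $\mu^{**}$-measurable if $Q\cap E$ is $\mu^*$-measurable for every $\mu^*$-measurable $E\in\mathcal{H}$, i.e. for all $A\in\mathcal{H}$ and all $E\in\overline{S}$, $\mu^*(A)=\mu^*[A\cap(Q\cap E)]+\mu^*[A\cap(Q\cap E)']$. *)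

theory Defs
  imports "HOL-Library.Extended_Nonnegative_Real"
begin

definition hereditary :: "'a set set \<Rightarrow> bool" where
  "hereditary H \<longleftrightarrow> H \<noteq> {} \<and> (\<forall>E\<in>H. \<forall>F. F \<subseteq> E \<longrightarrow> F \<in> H)"

definition sigma_ring_of_sets :: "'a set set \<Rightarrow> bool" where
  "sigma_ring_of_sets H \<longleftrightarrow> H \<noteq> {} \<and>
     (\<forall>E\<in>H. \<forall>F\<in>H. E - F \<in> H) \<and>
     (\<forall>A :: nat \<Rightarrow> 'a set. range A \<subseteq> H \<longrightarrow> (\<Union>i. A i) \<in> H)"

definition outer_measure_on :: "'a set set \<Rightarrow> ('a set \<Rightarrow> ennreal) \<Rightarrow> bool" where
  "outer_measure_on H \<mu> \<longleftrightarrow> \<mu> {} = 0 \<and>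
     (\<forall>E\<in>H. \<forall>F\<in>H. E \<subseteq> F \<longrightarrow> \<mu> E \<le> \<mu> F) \<and>
     (\<forall>A :: nat \<Rightarrow> 'a set. range A \<subseteq> H \<longrightarrow> (\<Union>i. A i) \<in> H \<longrightarrow>
        \<mu> (\<Union>i. A i) \<le> (\<Sum>i. \<mu> (A i)))"

definition mu_measurable :: "'a set set \<Rightarrow> ('a set \<Rightarrow> ennreal) \<Rightarrow> 'a set set" where
  "mu_measurable H \<mu> = {E \<in> H. \<forall>A\<in>H. \<mu> A = \<mu> (A \<inter> E) + \<mu> (A \<inter> - E)}"

definition K_class :: "'a set set \<Rightarrow> 'a set \<Rightarrow> 'a set set" where
  "K_class H X = {B. B \<subseteq> X \<and> (\<forall>E\<in>H. B \<inter> E \<in> H)}"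

definition mu2_measurable :: "'a set set \<Rightarrow> ('a set \<Rightarrow> ennreal) \<Rightarrow> 'a set \<Rightarrow> 'a set set" where
  "mu2_measurable H \<mu> X = {Q \<in> K_class H X. \<forall>A\<in>H. \<forall>E\<in>mu_measurable H \<mu>.
      \<mu> A = \<mu> (A \<inter> (Q \<inter> E)) + \<mu> (A \<inter> - (Q \<inter> E))}"

end

theory Submission
  imports Defs
begin

text \<open>The splitting identity that defines \<open>\<mu>\<^sup>*\<close>-measurability is symmetric in \<open>E\<close> and its
  complement, and splitting twice shows it is preserved by finite unions; hence the sets
  satisfying it form an algebra, and \<open>M - L = - (- M \<union> L)\<close>. Intersecting with a fixed
  \<open>\<mu>\<^sup>*\<close>-measurable \<open>E\<close> commutes with union and difference, so \<open>\<mu>\<^sup>*\<^sup>*\<close>-measurability is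
  inherited as well, while membership in \<open>K\<close> follows from \<open>\<H>\<close> being a hereditary
  \<open>\<sigma>\<close>-ring.\<close>

definition splits :: "'a set set \<Rightarrow> ('a set \<Rightarrow> ennreal) \<Rightarrow> 'a set \<Rightarrow> bool" where
  "splits H \<mu> E \<longleftrightarrow> (\<forall>A\<in>H. \<mu> A = \<mu> (A \<inter> E) + \<mu> (A \<inter> - E))"

lemma hereditaryD: "hereditary H \<Longrightarrow> A \<in> H \<Longrightarrow> B \<subseteq> A \<Longrightarrow> B \<in> H"
  unfolding hereditary_def by blast

lemma splits_Compl: "splits H \<mu> E \<Longrightarrow> splits H \<mu> (- E)"
  unfolding splits_def by (simp add: add.commute)

lemma splits_Un:
  assumes H: "hereditary H" and E: "splits H \<mu> E" and F: "splits H \<mu> F"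
  shows "splits H \<mu> (E \<union> F)"
  unfolding splits_def
proof
  fix A assume A: "A \<in> H"
  have "\<mu> A = \<mu> (A \<inter> E) + \<mu> (A \<inter> - E)"
    using E A unfolding splits_def by blast
  also have "\<mu> (A \<inter> - E) = \<mu> (A \<inter> - E \<inter> F) + \<mu> (A \<inter> - (E \<union> F))"
    using F hereditaryD[OF H A, of "A \<inter> - E"] unfolding splits_def
    by (simp add: Int_assoc)
  also have "\<mu> (A \<inter> E) + \<mu> (A \<inter> - E \<inter> F) = \<mu> (A \<inter> (E \<union> F))"
  proof -
    have "\<mu> (A \<inter> (E \<union> F)) = \<mu> (A \<inter> (E \<union> F) \<inter> E) + \<mu> (A \<inter> (E \<union> F) \<inter> - E)"
      using E hereditaryD[OF H A, of "A \<inter> (E \<union> F)"] unfolding splits_def by blast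
    moreover have "A \<inter> (E \<union> F) \<inter> E = A \<inter> E" "A \<inter> (E \<union> F) \<inter> - E = A \<inter> - E \<inter> F"
      by auto
    ultimately show ?thesis by simp
  qed
  ultimately show "\<mu> A = \<mu> (A \<inter> (E \<union> F)) + \<mu> (A \<inter> - (E \<union> F))"
    by (simp add: add.assoc)
qed

lemma splits_Diff:
  assumes "hereditary H" "splits H \<mu> E" "splits H \<mu> F"
  shows "splits H \<mu> (F - E)"
proof -
  have "splits H \<mu> (- (- F \<union> E))"
    using assms by (intro splits_Compl splits_Un) auto
  moreover have "- (- F \<union> E) = F - E" by blast
  ultimately show ?thesis by simp
qed

lemma sigma_ring_Un:
  assumes "sigma_ring_of_sets H" "P \<in> H" "Q \<in> H"
  shows "P \<union> Q \<in> H"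
proof -
  let ?A = "\<lambda>i::nat. if i = 0 then P else Q"
  have "range ?A \<subseteq> H"
    using assms(2,3) by auto
  then have "(\<Union>i. ?A i) \<in> H"
    using assms(1) unfolding sigma_ring_of_sets_def by blast
  moreover have "(\<Union>i. ?A i) = P \<union> Q"
    by (auto split: if_splits)
  ultimately show ?thesis by simp
qed

lemma K_class_Un:
  "sigma_ring_of_sets H \<Longrightarrow> L \<in> K_class H X \<Longrightarrow> M \<in> K_class H X \<Longrightarrow> L \<union> M \<in> K_class H X"
  unfolding K_class_def by (auto simp: Int_Un_distrib2 intro: sigma_ring_Un)

lemma K_class_Diff:
  "hereditary H \<Longrightarrow> M \<in> K_class H X \<Longrightarrow> M - L \<in> K_class H X"
  unfolding K_class_def by (blast intro: hereditaryD)

lemma mu2_measurable_iff: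
  "Q \<in> mu2_measurable H \<mu> X \<longleftrightarrow>
     Q \<in> K_class H X \<and> (\<forall>E\<in>mu_measurable H \<mu>. splits H \<mu> (Q \<inter> E))"
  unfolding mu2_measurable_def splits_def by blast

theorem theorem3p1:
  fixes H :: "'a set set" and \<mu> :: "'a set \<Rightarrow> ennreal" and X :: "'a set"
  assumes "hereditary H" and "sigma_ring_of_sets H"
    and "outer_measure_on H \<mu>"
    and "X \<inter> \<Union>H \<noteq> {}"
    and "L \<in> mu2_measurable H \<mu> X" and "M \<in> mu2_measurable H \<mu> X"
  shows "L \<union> M \<in> mu2_measurable H \<mu> X \<and> M - L \<in> mu2_measurable H \<mu> X"
proof -
  have K: "L \<in> K_class H X" "M \<in> K_class H X"
    and split: "\<And>E. E \<in> mu_measurable H \<mu> \<Longrightarrow> splits H \<mu> (L \<inter> E) \<and> splits H \<mu> (M \<inter> E)"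
    using assms(5,6) unfolding mu2_measurable_iff by auto
  have "splits H \<mu> ((L \<union> M) \<inter> E) \<and> splits H \<mu> ((M - L) \<inter> E)"
    if "E \<in> mu_measurable H \<mu>" for E
  proof -
    have "(L \<union> M) \<inter> E = L \<inter> E \<union> M \<inter> E" "(M - L) \<inter> E = M \<inter> E - L \<inter> E" by auto
    then show ?thesis
      using split[OF that] splits_Un[OF assms(1)] splits_Diff[OF assms(1)] by simp
  qed
  then show ?thesis
    unfolding mu2_measurable_iff
    using K_class_Un[OF assms(2) K] K_class_Diff[OF assms(1) K(2)] by blast
qed

end
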